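(* The coupled relation $(\mathrm{Id},\approx^n_A)$ is a call-by-name coupled logical bisimulation, where $\mathrm{Id}$ is the identity relation on $\Lambda^\bullet$. Conversely, if $(\mathcal{R}',\mathcal{R})$ is a call-by-name coupled logical bisimulation with $\mathcal{R}'\subseteq\mathcal{R}\cap\mathrm{Id}$, then $\mathcal{R}$ is an applicative bisimulation; in particular $\approx^n_2$ is an applicative bisimulation.
   Context: $\Lambda^\bullet$ is the set of closed $\lambda$-terms. Contexts are generated by $C::=x\mid[\cdot]\mid C\,C\mid\lambda x.C$, possibly with several holes numbered left to right; $C[\widetilde M]$ fills the $i$-th hole with $M_i$. For $\mathcal{R}\subseteq\Lambda^\bullet\times\Lambda^\bullet$, $\mathcal{R}^\star=\{(C[\widetilde M],C[\widetilde N]) : C\text{ a context},\ M_i\,\mathcal{R}\,N_i\ \forall i,\ C[\widetilde M],C[\widetilde N]\in\Lambda^\bullet\}$. Call-by-name reduction on closed terms: $MN\longrightarrow M'N$ if $M\longrightarrow M'$, and $(\lambda x.P)N\longrightarrow P[N/x]$; $\Longrightarrow$ is its reflexive transitive closure. A relation $\mathcal{R}\subseteq\Lambda^\bullet\times\Lambda^\bullet$ is an applicative bisimulation if $M\,\mathcal{R}\,N$ implies: whenever $M\Longrightarrow\lambda x.P$, then $N\Longrightarrow\lambda x.Q$ for some $Q$ with $P[W/x]\,\mathcal{R}\,Q[W/x]$ for all $W\in\Lambda^\bullet$, and conversely with $M,N$ exchanged; $\approx^n_A$ is the union of all applicative bisimulations. A coupled relation is a pair $(\mathcal{R}_1,\mathcal{R}_2)$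 of relations on $\Lambda^\bullet$ with $\mathcal{R}_1\subseteq\mathcal{R}_2$. It is a (call-by-name) coupled logical bisimulation if whenever $M\,\mathcal{R}_2\,N$: (1) if $M\longrightarrow M'$ then there is $N'$ with $N\Longrightarrow N'$ and $M'\,\mathcal{R}_2\,N'$; (2) if $M=\lambda x.M'$ then $N\Longrightarrow\lambda x.N'$ for some $N'$ and for all $P,Q\in\Lambda^\bullet$ with $P\,\mathcal{R}_1^\star\,Q$, $M'[P/x]\,\mathcal{R}_2\,N'[Q/x]$; (3) the converses of (1),(2) with $M$ and $N$ exchanged. $(\approx^n_1,\approx^n_2)$ is the componentwise union of all such bisimulations. *)

theory Defs
  imports Main
begin

section \<open>Pure lambda-terms with de Bruijn indices (alpha-equivalence is syntactic equality)\<close>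

datatype lterm = Var nat | App lterm lterm | Lam lterm

fun closed_at :: "nat \<Rightarrow> lterm \<Rightarrow> bool" where
  "closed_at k (Var i) = (i < k)"
| "closed_at k (App s t) = (closed_at k s \<and> closed_at k t)"
| "closed_at k (Lam t) = closed_at (Suc k) t"

definition closed :: "lterm \<Rightarrow> bool" where
  "closed t = closed_at 0 t"

definition Closed :: "lterm set" where
  "Closed = {t. closed t}"

text \<open>Substitution of a term W for index k (depth-aware). W is always a closed term
  in this development, so no lifting of W is needed.\<close>
fun subst :: "lterm \<Rightarrow> nat \<Rightarrow> lterm \<Rightarrow> lterm" where
  "subst (Var i) k W = (if i < k then Var i else if i = k then W else Var (i - 1))"
| "subst (App s t) k W = App (subst s k W) (subst t k W)"
| "subst (Lam t) k W = Lam (subst t (Suc k) W)"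

text \<open>P[W/x] where Lam P is the abstraction binding x.\<close>
abbreviation inst :: "lterm \<Rightarrow> lterm \<Rightarrow> lterm" where
  "inst P W \<equiv> subst P 0 W"

datatype ctx = CVar nat | Hole | CApp ctx ctx | CLam ctx

fun holes :: "ctx \<Rightarrow> nat" where
  "holes (CVar i) = 0"
| "holes Hole = 1"
| "holes (CApp C1 C2) = holes C1 + holes C2"
| "holes (CLam C) = holes C"

fun fill :: "ctx \<Rightarrow> lterm list \<Rightarrow> lterm" where
  "fill (CVar i) Ms = Var i"
| "fill Hole Ms = hd Ms"
| "fill (CApp C1 C2) Ms = App (fill C1 (take (holes C1) Ms)) (fill C2 (drop (holes C1) Ms))"
| "fill (CLam C) Ms = Lam (fill C Ms)"

definition ctx_closure :: "(lterm \<times> lterm) set \<Rightarrow> (lterm \<times> lterm) set" where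
  "ctx_closure R = {(fill C Ms, fill C Ns) | C Ms Ns.
      length Ms = holes C \<and> length Ns = holes C \<and>
      list_all2 (\<lambda>M N. (M, N) \<in> R) Ms Ns \<and>
      closed (fill C Ms) \<and> closed (fill C Ns)}"

inductive cbn :: "lterm \<Rightarrow> lterm \<Rightarrow> bool" where
  cbn_app: "cbn M M' \<Longrightarrow> cbn (App M N) (App M' N)"
| cbn_beta: "cbn (App (Lam P) N) (inst P N)"

abbreviation cbn_star :: "lterm \<Rightarrow> lterm \<Rightarrow> bool" where
  "cbn_star \<equiv> cbn\<^sup>*\<^sup>*"

definition app_sim_step :: "(lterm \<times> lterm) set \<Rightarrow> lterm \<Rightarrow> lterm \<Rightarrow> bool" where
  "app_sim_step R M N \<longleftrightarrow>
     (\<forall>P. cbn_star M (Lam P) \<longrightarrow>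
        (\<exists>Q. cbn_star N (Lam Q) \<and> (\<forall>W. closed W \<longrightarrow> (inst P W, inst Q W) \<in> R)))"

definition app_bisim :: "(lterm \<times> lterm) set \<Rightarrow> bool" where
  "app_bisim R \<longleftrightarrow> R \<subseteq> Closed \<times> Closed \<and>
     (\<forall>M N. (M, N) \<in> R \<longrightarrow> app_sim_step R M N \<and> app_sim_step (R\<inverse>) N M)"

definition app_bisimilar :: "(lterm \<times> lterm) set" where
  "app_bisimilar = \<Union>{R. app_bisim R}"

definition clb_step :: "(lterm \<times> lterm) set \<Rightarrow> (lterm \<times> lterm) set \<Rightarrow> lterm \<Rightarrow> lterm \<Rightarrow> bool" where
  "clb_step R1 R2 M N \<longleftrightarrow>
     (\<forall>M'. cbn M M' \<longrightarrow> (\<exists>N'. cbn_star N N' \<and> (M', N') \<in> R2)) \<and>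
     (\<forall>M'. M = Lam M' \<longrightarrow>
        (\<exists>N'. cbn_star N (Lam N') \<and>
          (\<forall>P Q. (P, Q) \<in> ctx_closure R1 \<longrightarrow> (inst M' P, inst N' Q) \<in> R2)))"

text \<open>A coupled relation (R1, R2): relations on closed terms with R1 \<subseteq> R2.
  Clause (3) is obtained by applying the step to the converse relations.\<close>
definition coupled_logical_bisim :: "(lterm \<times> lterm) set \<Rightarrow> (lterm \<times> lterm) set \<Rightarrow> bool" where
  "coupled_logical_bisim R1 R2 \<longleftrightarrow>
     R1 \<subseteq> R2 \<and> R2 \<subseteq> Closed \<times> Closed \<and>
     (\<forall>M N. (M, N) \<in> R2 \<longrightarrow> clb_step R1 R2 M N \<and> clb_step (R1\<inverse>) (R2\<inverse>) N M)"

definition clb_approx1 :: "(lterm \<times> lterm) set" where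
  "clb_approx1 = \<Union>{R1. \<exists>R2. coupled_logical_bisim R1 R2}"

definition clb_approx2 :: "(lterm \<times> lterm) set" where
  "clb_approx2 = \<Union>{R2. \<exists>R1. coupled_logical_bisim R1 R2}"

end

theory Submission
  imports Defs
begin

text \<open>
  (a) Applicative bisimilarity is invariant under call-by-name reduction on either side:
      since reduction is deterministic and abstractions are normal forms, a step
      M \<longrightarrow> M' neither creates nor destroys the abstraction M eventually reaches.  Hence
      the relation obtained from an applicative bisimulation by adding one-step reducts
      on either side is again an applicative bisimulation, so the largest one is closed
      under reduction.  This answers clause (1) of a coupled logical bisimulation with
      the trivial move N \<Longrightarrow> N; clause (2) follows because the context closure of the
      identity on closed terms only relates equal closed terms.

  (b) Conversely, every closed term is related to itself in the context closure of any
      relation (take the hole-free context), so clause (2) of a coupled logical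
      bisimulation provides the applicative clause for all closed arguments W, and
      clause (1) lets us follow the reduction M \<Longrightarrow> \<lambda>x.P step by step.  Thus the second
      component of every coupled logical bisimulation is an applicative bisimulation.  Unions of applicative bisimulations
      are applicative bisimulations, which gives the claim for the
      second component of coupled logical bisimilarity.
\<close>

lemma closed_at_mono: "closed_at k t \<Longrightarrow> k \<le> m \<Longrightarrow> closed_at m t"
  by (induction t arbitrary: k m) fastforce+

lemma closed_at_subst: "closed_at (Suc k) t \<Longrightarrow> closed W \<Longrightarrow> closed_at k (subst t k W)"
  by (induction t arbitrary: k) (auto simp: closed_def intro: closed_at_mono)

lemma closed_inst: "closed (Lam P) \<Longrightarrow> closed W \<Longrightarrow> closed (inst P W)"
  using closed_at_subst[of 0 P W] by (simp add: closed_def)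

lemma cbn_closed: "cbn M M' \<Longrightarrow> closed M \<Longrightarrow> closed M'"
  by (induction rule: cbn.induct) (auto simp: closed_def intro: closed_inst[unfolded closed_def])

lemma cbn_star_closed: "cbn_star M M' \<Longrightarrow> closed M \<Longrightarrow> closed M'"
  by (induction rule: rtranclp_induct) (auto intro: cbn_closed)

lemma cbn_Lam_normal: "\<not> cbn (Lam P) X"
  by (auto elim: cbn.cases)

lemma cbn_deterministic: "cbn M A \<Longrightarrow> cbn M B \<Longrightarrow> A = B"
proof (induction arbitrary: B rule: cbn.induct)
  case (cbn_app M M' N)
  from cbn_app.prems show ?case
    by cases (use cbn_app.IH cbn_app.hyps cbn_Lam_normal in auto)
next
  case (cbn_beta P N)
  from cbn_beta.prems show ?case
    by cases (use cbn_Lam_normal in auto)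
qed

text \<open>By determinism, a reduction to an abstraction passes through every one-step reduct.\<close>
lemma cbn_star_Lam_step: "cbn_star M (Lam P) \<Longrightarrow> cbn M M' \<Longrightarrow> cbn_star M' (Lam P)"
  by (erule converse_rtranclpE) (auto simp: cbn_Lam_normal dest: cbn_deterministic)

fun ctx_of :: "lterm \<Rightarrow> ctx" where
  "ctx_of (Var i) = CVar i"
| "ctx_of (App s t) = CApp (ctx_of s) (ctx_of t)"
| "ctx_of (Lam t) = CLam (ctx_of t)"

lemma holes_ctx_of: "holes (ctx_of t) = 0"
  by (induction t) auto

lemma fill_ctx_of: "fill (ctx_of t) [] = t"
  by (induction t) (auto simp: holes_ctx_of)

lemma closed_in_ctx_closure: "closed W \<Longrightarrow> (W, W) \<in> ctx_closure R"
  unfolding ctx_closure_def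
  by (rule CollectI, rule exI[of _ "ctx_of W"], rule exI[of _ "[]"], rule exI[of _ "[]"])
     (simp add: holes_ctx_of fill_ctx_of)

lemma ctx_closure_Id_on: "(P, Q) \<in> ctx_closure (Id_on A) \<Longrightarrow> P = Q"
proof -
  assume "(P, Q) \<in> ctx_closure (Id_on A)"
  then obtain C Ms Ns where PQ: "P = fill C Ms" "Q = fill C Ns"
    and related: "list_all2 (\<lambda>M N. (M, N) \<in> Id_on A) Ms Ns"
    unfolding ctx_closure_def by blast
  from related have "list_all2 (=) Ms Ns" by (rule list_all2_mono) auto
  then have "Ms = Ns" by (simp add: list_all2_eq)
  then show "P = Q" using PQ by simp
qed

lemma app_sim_step_mono: "R \<subseteq> S \<Longrightarrow> app_sim_step R M N \<Longrightarrow> app_sim_step S M N"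
  unfolding app_sim_step_def by blast

lemma app_bisim_Union: "(\<And>R. R \<in> F \<Longrightarrow> app_bisim R) \<Longrightarrow> app_bisim (\<Union>F)"
proof -
  assume bisims: "\<And>R. R \<in> F \<Longrightarrow> app_bisim R"
  have "app_sim_step (\<Union>F) M N \<and> app_sim_step ((\<Union>F)\<inverse>) N M" if "(M, N) \<in> \<Union>F" for M N
  proof -
    from that obtain R where R: "R \<in> F" "(M, N) \<in> R" by blast
    with bisims have "app_sim_step R M N" "app_sim_step (R\<inverse>) N M"
      unfolding app_bisim_def by blast+
    moreover have "R \<subseteq> \<Union>F" "R\<inverse> \<subseteq> (\<Union>F)\<inverse>" using R(1) by auto
    ultimately show ?thesis using app_sim_step_mono by blast
  qed
  moreover have "\<Union>F \<subseteq> Closed \<times> Closed" using bisims unfolding app_bisim_def by blast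
  ultimately show ?thesis unfolding app_bisim_def by blast
qed

lemma app_bisim_app_bisimilar: "app_bisim app_bisimilar"
  unfolding app_bisimilar_def by (rule app_bisim_Union) auto

lemma app_bisim_subset_app_bisimilar: "app_bisim R \<Longrightarrow> R \<subseteq> app_bisimilar"
  unfolding app_bisimilar_def by blast

lemma app_bisim_Id_on_Closed: "app_bisim (Id_on Closed)"
proof -
  have "app_sim_step (Id_on Closed) M M" if "closed M" for M
    unfolding app_sim_step_def
  proof (intro allI impI)
    fix P assume red: "cbn_star M (Lam P)"
    then have "closed (Lam P)" using cbn_star_closed that by blast
    then have "\<forall>W. closed W \<longrightarrow> (inst P W, inst P W) \<in> Id_on Closed"
      using closed_inst unfolding Closed_def by blast
    with red show "\<exists>Q. cbn_star M (Lam Q) \<and> (\<forall>W. closed W \<longrightarrow> (inst P W, inst Q W) \<in> Id_on Closed)"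
      by blast
  qed
  then show ?thesis unfolding app_bisim_def Closed_def by auto
qed

text \<open>The left term may take a step: its eventual abstraction was reachable before.\<close>
lemma app_sim_step_left_step:
  "cbn M M' \<Longrightarrow> app_sim_step R M N \<Longrightarrow> app_sim_step R M' N"
  unfolding app_sim_step_def by (meson converse_rtranclp_into_rtranclp)

text \<open>The right term may take a step: by determinism it still reaches the same abstraction.\<close>
lemma app_sim_step_right_step:
  "cbn N N' \<Longrightarrow> app_sim_step R M N \<Longrightarrow> app_sim_step R M N'"
  unfolding app_sim_step_def by (meson cbn_star_Lam_step)

definition add_reducts :: "(lterm \<times> lterm) set \<Rightarrow> (lterm \<times> lterm) set" where
  "add_reducts R = R \<union> {(M', N) | M M' N. cbn M M' \<and> (M, N) \<in> R}
                     \<union> {(M, N') | M N N'. cbn N N' \<and> (M, N) \<in> R}"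

lemma app_bisim_add_reducts:
  assumes bisim: "app_bisim R"
  shows "app_bisim (add_reducts R)"
proof -
  have steps: "app_sim_step R M N" "app_sim_step (R\<inverse>) N M" if "(M, N) \<in> R" for M N
    using bisim that unfolding app_bisim_def by blast+
  have "app_sim_step R M N \<and> app_sim_step (R\<inverse>) N M" if "(M, N) \<in> add_reducts R" for M N
  proof -
    from that consider "(M, N) \<in> R"
      | M0 where "cbn M0 M" "(M0, N) \<in> R"
      | N0 where "cbn N0 N" "(M, N0) \<in> R"
      unfolding add_reducts_def by blast
    then show ?thesis
      by cases (use steps app_sim_step_left_step app_sim_step_right_step in blast)+
  qed
  moreover have "R \<subseteq> add_reducts R" "R\<inverse> \<subseteq> (add_reducts R)\<inverse>"
    unfolding add_reducts_def by auto
  moreover have "add_reducts R \<subseteq> Closed \<times> Closed"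
    using bisim unfolding app_bisim_def add_reducts_def Closed_def by (auto intro: cbn_closed)
  ultimately show ?thesis unfolding app_bisim_def using app_sim_step_mono by meson
qed

lemma app_bisimilar_left_step:
  "cbn M M' \<Longrightarrow> (M, N) \<in> app_bisimilar \<Longrightarrow> (M', N) \<in> app_bisimilar"
  using app_bisim_subset_app_bisimilar[OF app_bisim_add_reducts[OF app_bisim_app_bisimilar]]
  unfolding add_reducts_def by blast

lemma app_bisimilar_right_step:
  "cbn N N' \<Longrightarrow> (M, N) \<in> app_bisimilar \<Longrightarrow> (M, N') \<in> app_bisimilar"
  using app_bisim_subset_app_bisimilar[OF app_bisim_add_reducts[OF app_bisim_app_bisimilar]]
  unfolding add_reducts_def by blast

text \<open>An applicative simulation step, in a relation closed under left reduction, is a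
  logical bisimulation step with the identity on closed terms as first component:
  reductions are answered by the empty reduction, and identical arguments suffice.\<close>
lemma app_sim_step_imp_clb_step:
  assumes sim: "app_sim_step R M N"
    and left_closed: "\<And>M'. cbn M M' \<Longrightarrow> (M', N) \<in> R"
  shows "clb_step (Id_on Closed) R M N"
  unfolding clb_step_def
proof (intro conjI allI impI)
  fix M' assume "cbn M M'"
  then show "\<exists>N'. cbn_star N N' \<and> (M', N') \<in> R" using left_closed by blast
next
  fix M' assume "M = Lam M'"
  with sim obtain Q where "cbn_star N (Lam Q)" "\<forall>W. closed W \<longrightarrow> (inst M' W, inst Q W) \<in> R"
    unfolding app_sim_step_def by blast
  moreover have "P = Q \<and> closed P" if "(P, Q) \<in> ctx_closure (Id_on Closed)" for P Q
    using that ctx_closure_Id_on[OF that] unfolding ctx_closure_def by blast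
  ultimately show "\<exists>N'. cbn_star N (Lam N') \<and>
      (\<forall>P Q. (P, Q) \<in> ctx_closure (Id_on Closed) \<longrightarrow> (inst M' P, inst N' Q) \<in> R)"
    by metis
qed

lemma coupled_logical_bisim_app_bisimilar:
  "coupled_logical_bisim (Id_on Closed) app_bisimilar"
proof -
  have "clb_step (Id_on Closed) app_bisimilar M N \<and>
        clb_step ((Id_on Closed)\<inverse>) (app_bisimilar\<inverse>) N M"
    if related: "(M, N) \<in> app_bisimilar" for M N
  proof -
    from related have "app_sim_step app_bisimilar M N" "app_sim_step (app_bisimilar\<inverse>) N M"
      using app_bisim_app_bisimilar unfolding app_bisim_def by blast+
    moreover have "(Id_on Closed)\<inverse> = Id_on Closed" by auto
    ultimately show ?thesis
      using related app_bisimilar_left_step app_bisimilar_right_step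
      by (auto intro!: app_sim_step_imp_clb_step)
  qed
  moreover have "Id_on Closed \<subseteq> app_bisimilar"
    by (rule app_bisim_subset_app_bisimilar[OF app_bisim_Id_on_Closed])
  moreover have "app_bisimilar \<subseteq> Closed \<times> Closed"
    using app_bisim_app_bisimilar unfolding app_bisim_def by blast
  ultimately show ?thesis unfolding coupled_logical_bisim_def by blast
qed

text \<open>If every pair of R2 satisfies the logical bisimulation step, then every pair of R2
  satisfies the applicative simulation step: follow the reduction of M to an abstraction,
  then instantiate clause (2) with a closed term related to itself.\<close>
lemma clb_steps_imp_app_sim_step:
  assumes clb: "\<And>M N. (M, N) \<in> R2 \<Longrightarrow> clb_step R1 R2 M N"
    and related: "(M, N) \<in> R2"
  shows "app_sim_step R2 M N"
  unfolding app_sim_step_def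
proof (intro allI impI)
  fix P assume "cbn_star M (Lam P)"
  then show "\<exists>Q. cbn_star N (Lam Q) \<and> (\<forall>W. closed W \<longrightarrow> (inst P W, inst Q W) \<in> R2)"
    using related
  proof (induction arbitrary: N rule: converse_rtranclp_induct)
    case base
    with clb obtain Q where "cbn_star N (Lam Q)"
      and "\<forall>P' Q'. (P', Q') \<in> ctx_closure R1 \<longrightarrow> (inst P P', inst Q Q') \<in> R2"
      unfolding clb_step_def by blast
    then show ?case using closed_in_ctx_closure by blast
  next
    case (step M M')
    with clb obtain N' where "cbn_star N N'" "(M', N') \<in> R2"
      unfolding clb_step_def by blast
    with step.IH show ?case by (meson rtranclp_trans)
  qed
qed

lemma coupled_logical_bisim_imp_app_bisim:
  assumes clb: "coupled_logical_bisim R' R"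
  shows "app_bisim R"
proof -
  have "app_sim_step R M N" "app_sim_step (R\<inverse>) N M" if "(M, N) \<in> R" for M N
  proof -
    show "app_sim_step R M N"
      using clb that by (intro clb_steps_imp_app_sim_step[of R R']) (auto simp: coupled_logical_bisim_def)
    show "app_sim_step (R\<inverse>) N M"
      using clb that by (intro clb_steps_imp_app_sim_step[of "R\<inverse>" "R'\<inverse>"]) (auto simp: coupled_logical_bisim_def)
  qed
  moreover have "R \<subseteq> Closed \<times> Closed" using clb unfolding coupled_logical_bisim_def by blast
  ultimately show ?thesis unfolding app_bisim_def by blast
qed

theorem mainTheorem9:
  shows "coupled_logical_bisim (Id_on Closed) app_bisimilar
     \<and> (\<forall>R' R. coupled_logical_bisim R' R \<and> R' \<subseteq> R \<inter> Id \<longrightarrow> app_bisim R)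
     \<and> app_bisim clb_approx2"
proof (intro conjI allI impI)
  show "coupled_logical_bisim (Id_on Closed) app_bisimilar"
    by (rule coupled_logical_bisim_app_bisimilar)
next
  fix R' R assume "coupled_logical_bisim R' R \<and> R' \<subseteq> R \<inter> Id"
  then show "app_bisim R" using coupled_logical_bisim_imp_app_bisim by blast
next
  show "app_bisim clb_approx2"
    unfolding clb_approx2_def
    by (rule app_bisim_Union) (auto intro: coupled_logical_bisim_imp_app_bisim)
qed

end
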